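(* Let $j\in\mathbb{N}$ and $b,r\in\mathbb{Z}$ with $b\neq0$. Then $$\sum_{d=-\infty}^{+\infty}\frac{1}{\left(d+\frac{r}{b}-\frac{1}{2b}\right)^{j}}=\frac{(2\pi \mathrm{i})^{j}\,\mathrm{sgn}(b)}{2\,(j-1)!\,b^{1-j}}\sum_{l=0}^{|b|-1}e^{-\frac{2\pi \mathrm{i} lr}{b}+\frac{\pi \mathrm{i} l}{b}}\,\overline{E}_{j-1}\!\left(\frac{l}{b}\right).$$
   Context: $\mathrm{i}^2=-1$. Doubly infinite sums $\sum_{d=-\infty}^{+\infty}$ are interpreted as $\lim_{N\to\infty}\sum_{d=-N}^{N}$ (this matters for $j=1$). $[x]$ is the floor of $x$, $\{x\}=x-[x]$, $E_n(x)$ is the Euler polynomial ($\frac{2e^{xt}}{e^t+1}=\sum_{n\ge0}E_n(x)\frac{t^n}{n!}$). Quasi-periodic Euler functions: $\overline{E}_{0}(x)=(-1)^{[x]}$ if $x\notin\mathbb{Z}$ and $\overline{E}_0(x)=0$ if $x\in\mathbb{Z}$; $\overline{E}_{n}(x)=(-1)^{[x]}E_{n}(\{x\})$ for $n\ge1$. $\mathrm{sgn}(b)=b/|b|$. *)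

theory Defs
  imports "HOL-Analysis.Analysis" "HOL-Computational_Algebra.Formal_Power_Series"
begin

definition euler_poly :: "nat \<Rightarrow> real \<Rightarrow> real" where
  "euler_poly n x = fact n * fps_nth (fps_const 2 * fps_exp x / (fps_exp 1 + 1)) n"

definition euler_bar :: "nat \<Rightarrow> real \<Rightarrow> real" where
  "euler_bar n x =
     (if n = 0 then (if x \<in> \<int> then 0 else (-1) powi \<lfloor>x\<rfloor>)
      else (-1) powi \<lfloor>x\<rfloor> * euler_poly n (frac x))"

end

theory Submission
  imports Defs "HOL-Complex_Analysis.Complex_Analysis" "HOL-Real_Asymp.Real_Asymp"
begin

text \<open>
  For x \<notin> \<int> the symmetric sum of (d + x)^-(n+1) over d \<in> \<int> converges to
  (\<psi>^(n)(1 - x) - (-1)^n \<psi>^(n)(x)) / n!, the n-th Taylor coefficient at 0 of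
  g(t) = \<psi>(1 - x + t) - \<psi>(x - t). By the reflection formula
  g(t) = \<pi> cot(\<pi>(x - t)) = \<pi>i (1 + q) / (1 - q) with q = exp(2\<pi>i(t - x)).
  For x = (2r - 1)/(2b) one has q^|b| = -exp(\<plusminus>2\<pi>ibt), so summing the geometric series
  of the q^l, l < |b|, writes (1 + q) / (1 - q) in terms of the generating function
  2 exp(ys) / (exp s + 1) of the Euler polynomials at s = 2\<pi>ibt and y = l/b reduced mod 1;
  its Taylor coefficients are the quasi-periodic Euler functions at l/b.
\<close>

unbundle no vec_syntax

lemma Digamma_reflection_complex:
  fixes z :: complex
  assumes "z \<notin> \<int>"
  shows "Digamma (1 - z) - Digamma z = of_real pi * cot (of_real pi * z)"
proof -
  have z: "z \<notin> \<int>\<^sub>\<le>\<^sub>0" "1 - z \<notin> \<int>\<^sub>\<le>\<^sub>0"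
    using assms nonpos_Ints_subset_Ints Ints_diff[of 1 "1 - z"] by auto
  have sin: "sin (of_real pi * z) \<noteq> 0"
    using assms by (auto simp: sin_eq_0)
  have "((\<lambda>z. Gamma z * Gamma (1 - z)) has_field_derivative
          Gamma z * Gamma (1 - z) * (Digamma z - Digamma (1 - z))) (at z)"
    using z by (auto intro!: derivative_eq_intros simp: algebra_simps)
  moreover have "((\<lambda>z. Gamma z * Gamma (1 - z)) has_field_derivative
          - (of_real pi * cos (of_real pi * z) * of_real pi) / (sin (of_real pi * z))\<^sup>2) (at z)"
    unfolding Gamma_reflection_complex using sin
    by (auto intro!: derivative_eq_intros simp: power2_eq_square)
  ultimately have "of_real pi / sin (of_real pi * z) * (Digamma z - Digamma (1 - z))
      = - (of_real pi * cos (of_real pi * z) * of_real pi) / (sin (of_real pi * z))\<^sup>2"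
    by (metis DERIV_unique Gamma_reflection_complex)
  then have "of_real pi / sin (of_real pi * z) * (Digamma (1 - z) - Digamma z)
      = of_real pi / sin (of_real pi * z) * (of_real pi * cot (of_real pi * z))"
    using sin by (simp add: cot_def power2_eq_square right_diff_distrib field_simps)
  with sin show ?thesis
    by simp
qed

lemma sum_atLeastAtMost_symmetric_int:
  fixes f :: "int \<Rightarrow> 'a::comm_monoid_add"
  shows "(\<Sum>d\<in>{- int N..int N}. f d) = (\<Sum>k<Suc N. f (int k)) + (\<Sum>k<N. f (- int k - 1))"
proof (induction N)
  case (Suc N)
  have "{- int (Suc N)..int (Suc N)} = insert (- int N - 1) (insert (int N + 1) {- int N..int N})"
    by auto
  then show ?case
    using Suc by (simp add: algebra_simps)
qed simp

lemma symmetric_sum_inverse_power_LIMSEQ: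
  fixes x :: complex
  assumes "x \<notin> \<int>"
  shows "(\<lambda>N. \<Sum>d\<in>{- int N..int N}. 1 / (of_int d + x) ^ Suc n)
           \<longlonglongrightarrow> (Polygamma n (1 - x) - (-1) ^ n * Polygamma n x) / fact n"
proof -
  have x: "x \<noteq> 0" "1 - x \<noteq> 0"
    using assms by auto
  define S where "S y M = (\<Sum>k<M. inverse ((y + of_nat k) ^ Suc n))" for y :: complex and M
  have neg: "1 / (of_int (- int k - 1) + x) ^ Suc n = (-1) ^ Suc n * inverse ((1 - x + of_nat k) ^ Suc n)" for k
  proof -
    have "of_int (- int k - 1) + x = - (1 - x + of_nat k)"
      by simp
    then have "(of_int (- int k - 1) + x) ^ Suc n = (-1) ^ Suc n * (1 - x + of_nat k) ^ Suc n"
      by (metis power_minus)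
    then show ?thesis
      by (cases "even n") (simp_all add: divide_inverse)
  qed
  have split: "(\<Sum>d\<in>{- int N..int N}. 1 / (of_int d + x) ^ Suc n) = S x (Suc N) - (-1) ^ n * S (1 - x) N" for N
    unfolding sum_atLeastAtMost_symmetric_int neg S_def
    by (simp add: sum_distrib_left sum_negf add.commute divide_inverse)
  show ?thesis
  proof (cases "n = 0")
    case True
    have "(\<lambda>N. of_real (ln (real (Suc N))) - S x (Suc N)) \<longlonglongrightarrow> Digamma x"
      using LIMSEQ_Suc[OF Digamma_LIMSEQ[OF x(1)]] True by (simp add: S_def)
    moreover have "(\<lambda>N. of_real (ln (real N)) - S (1 - x) N) \<longlonglongrightarrow> Digamma (1 - x)"
      using Digamma_LIMSEQ[OF x(2)] True by (simp add: S_def)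
    moreover have "(\<lambda>N. ln (real (Suc N)) - ln (real N)) \<longlonglongrightarrow> 0"
      by real_asymp
    ultimately have "(\<lambda>N. (of_real (ln (real N)) - S (1 - x) N) - (of_real (ln (real (Suc N))) - S x (Suc N))
        + of_real (ln (real (Suc N)) - ln (real N))) \<longlonglongrightarrow> Digamma (1 - x) - Digamma x + of_real 0"
      by (intro tendsto_intros)
    then show ?thesis
      unfolding split using True by simp
  next
    case False
    then have n: "n > 0"
      by simp
    have "(\<lambda>N. S x N) \<longlonglongrightarrow> (-1) ^ Suc n * Polygamma n x / fact n"
         "(\<lambda>N. S (1 - x) N) \<longlonglongrightarrow> (-1) ^ Suc n * Polygamma n (1 - x) / fact n"
      using Polygamma_LIMSEQ[OF x(1) n] Polygamma_LIMSEQ[OF x(2) n] by (simp_all add: S_def sums_def)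
    then have "(\<lambda>N. S x (Suc N) - (-1) ^ n * S (1 - x) N) \<longlonglongrightarrow>
        (-1) ^ Suc n * Polygamma n x / fact n - (-1) ^ n * ((-1) ^ Suc n * Polygamma n (1 - x) / fact n)"
      by (intro tendsto_intros LIMSEQ_Suc)
    moreover have "(-1::complex) ^ n * (-1) ^ Suc n = -1"
      by simp
    ultimately show ?thesis
      unfolding split by (simp add: algebra_simps diff_divide_distrib)
  qed
qed

lemma higher_deriv_Polygamma_affine:
  fixes c u :: complex
  assumes "c \<notin> \<int>\<^sub>\<le>\<^sub>0"
  shows "(deriv ^^ n) (\<lambda>t. Polygamma m (c + u * t)) 0 = u ^ n * Polygamma (m + n) c"
proof -
  have "open ((\<lambda>t. u * t + c) -` (- \<int>\<^sub>\<le>\<^sub>0))"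
    by (intro continuous_open_vimage) (auto intro!: continuous_intros)
  then have "(deriv ^^ n) (\<lambda>t. Polygamma m (u * t + c)) 0 = u ^ n * (deriv ^^ n) (Polygamma m) c"
    using assms by (subst higher_deriv_compose_linear'[where T = "- \<int>\<^sub>\<le>\<^sub>0"])
      (auto intro!: holomorphic_intros)
  then show ?thesis
    using higher_deriv_Polygamma[OF assms] by (simp add: add.commute)
qed

lemma higher_deriv_Digamma_reflection_diff:
  fixes x :: complex
  assumes "x \<notin> \<int>"
  shows "(deriv ^^ n) (\<lambda>t. Digamma (1 - x + t) - Digamma (x - t)) 0
           = Polygamma n (1 - x) - (-1) ^ n * Polygamma n x"
proof -
  have x: "x \<notin> \<int>\<^sub>\<le>\<^sub>0" "1 - x \<notin> \<int>\<^sub>\<le>\<^sub>0"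
    using assms nonpos_Ints_subset_Ints Ints_diff[of 1 "1 - x"] by auto
  have "(deriv ^^ n) (\<lambda>t. Digamma (1 - x + 1 * t) - Digamma (x + (-1) * t)) 0
      = (deriv ^^ n) (\<lambda>t. Digamma (1 - x + 1 * t)) 0 - (deriv ^^ n) (\<lambda>t. Digamma (x + (-1) * t)) 0"
    using x by (intro higher_deriv_diff_at) (auto intro!: analytic_intros)
  also have "\<dots> = Polygamma n (1 - x) - (-1) ^ n * Polygamma n x"
    using higher_deriv_Polygamma_affine[OF x(2), of n 0 1] higher_deriv_Polygamma_affine[OF x(1), of n 0 "-1"]
    by simp
  finally show ?thesis
    by simp
qed

lemma cot_exp_eq:
  fixes z :: complex
  shows "cot z = \<i> * (1 + exp (-2 * \<i> * z)) / (1 - exp (-2 * \<i> * z))"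
proof -
  define u where "u = exp (\<i> * z)"
  define v where "v = exp (- (\<i> * z))"
  have uv: "u * v = 1" "v \<noteq> 0" by (simp_all add: u_def v_def flip: exp_add)
  have "cot z = (u + v) / 2 / ((u - v) / (2 * \<i>))"
    by (simp add: cot_def sin_exp_eq cos_exp_eq u_def v_def)
  also have "\<dots> = \<i> * (1 + v * v) / (1 - v * v)"
  proof (cases "u = v")
    case False
    have "1 - v * v = v * (u - v)"
      using uv by (simp add: algebra_simps)
    with False uv have "1 - v * v \<noteq> 0" by simp
    with False uv show ?thesis by (simp add: field_simps)
  qed (use uv in \<open>simp add: algebra_simps\<close>)
  also have "v * v = exp (-2 * \<i> * z)"
    by (simp add: v_def mult.assoc flip: exp_add)
  finally show ?thesis .
qed

lemma exp_2pi_i_eq_1_iff: "exp (2 * of_real pi * \<i> * z) = 1 \<longleftrightarrow> z \<in> \<int>"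
proof
  assume "exp (2 * of_real pi * \<i> * z) = 1"
  then obtain n :: int where "Im z = 0" "Re z = of_int n"
    by (auto simp: exp_eq_1)
  then have "z = of_int n" by (simp add: complex_eq_iff)
  then show "z \<in> \<int>" by simp
next
  assume "z \<in> \<int>"
  then show "exp (2 * of_real pi * \<i> * z) = 1"
    by (auto elim!: Ints_cases simp: mult_ac)
qed

lemma exp_pi_i_odd:
  assumes "odd k"
  shows "exp (of_real pi * \<i> * of_int k) = -1"
proof -
  obtain m where "k = 2 * m + 1"
    using assms by (auto elim!: oddE)
  then show ?thesis
    using exp_integer_2pi_plus1[of "of_int m"] by (simp add: mult_ac)
qed

lemma not_Ints_if_double_odd:
  fixes x :: complex
  assumes "2 * of_int b * x = 2 * of_int r - 1"
  shows "x \<notin> \<int>"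
proof
  assume "x \<in> \<int>"
  then obtain m where "x = of_int m"
    by (auto elim: Ints_cases)
  with assms have "of_int (2 * b * m) = (of_int (2 * r - 1) :: complex)"
    by simp
  then have "2 * b * m = 2 * r - 1"
    by (simp only: of_int_eq_iff)
  then have "even (2 * r - 1)"
    by (metis dvd_triv_left mult.assoc)
  then show False
    by simp
qed

lemma euler_poly_0 [simp]: "euler_poly 0 y = 1"
  by (simp add: euler_poly_def fps_divide_unit)

lemma fps_nth_euler_poly_gf_scaled:
  fixes y :: real and c :: complex
  shows "(fps_const 2 * fps_exp (of_real y * c) / (fps_exp c + 1)) $ n
           = c ^ n / fact n * of_real (euler_poly n y)"
proof -
  define Q :: "real fps" where "Q = fps_exp 1 + 1"
  define P where "P = fps_const 2 * fps_exp y / Q"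
  define G where "G = Abs_fps (\<lambda>n. c ^ n * of_real (P $ n))"
  have "Q $ 0 \<noteq> 0"
    by (simp add: Q_def)
  then have PQ: "P * Q = fps_const 2 * fps_exp y"
    unfolding P_def by (intro fps_times_divide_eq) (auto simp: subdegree_eq_0)
  have Qc: "(fps_exp c + 1) $ k = c ^ k * of_real (Q $ k)" for k
    by (cases k) (simp_all add: Q_def)
  have "G * (fps_exp c + 1) = fps_const 2 * fps_exp (of_real y * c)"
  proof (rule fps_ext)
    fix n
    have "(G * (fps_exp c + 1)) $ n = (\<Sum>i=0..n. c ^ n * of_real (P $ i * Q $ (n - i)))"
      unfolding fps_mult_nth
    proof (intro sum.cong refl)
      fix i assume "i \<in> {0..n}"
      then have pow: "c ^ n = c ^ i * c ^ (n - i)"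
        by (simp flip: power_add)
      show "G $ i * (fps_exp c + 1) $ (n - i) = c ^ n * of_real (P $ i * Q $ (n - i))"
        unfolding pow Qc by (simp add: G_def ac_simps)
    qed
    also have "\<dots> = c ^ n * of_real ((P * Q) $ n)"
      by (simp add: fps_mult_nth sum_distrib_left)
    finally have "(G * (fps_exp c + 1)) $ n = c ^ n * of_real ((P * Q) $ n)" .
    then show "(G * (fps_exp c + 1)) $ n = (fps_const 2 * fps_exp (of_real y * c)) $ n"
      unfolding PQ by (simp add: power_mult_distrib)
  qed
  moreover have "fps_exp c + 1 \<noteq> (0 :: complex fps)"
    by (auto simp: fps_eq_iff intro!: exI[of _ 0])
  ultimately have "fps_const 2 * fps_exp (of_real y * c) / (fps_exp c + 1) = G"
    by (metis fps_divide_times_eq)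
  then show ?thesis
    by (simp add: G_def P_def Q_def euler_poly_def)
qed

text \<open>The subtracted term accounts for \<open>euler_bar 0\<close> vanishing at the integers.\<close>

definition euler_bar_gf :: "complex \<Rightarrow> real \<Rightarrow> complex \<Rightarrow> complex" where
  "euler_bar_gf c y t = of_real ((-1) powi \<lfloor>y\<rfloor>)
     * (2 * exp (of_real (frac y) * c * t) / (exp (c * t) + 1) - (if y \<in> \<int> then 1 else 0))"

lemma euler_bar_gf_has_fps_expansion:
  "euler_bar_gf c y has_fps_expansion Abs_fps (\<lambda>n. c ^ n / fact n * of_real (euler_bar n y))"
proof -
  have "euler_bar_gf c y has_fps_expansion
      fps_const (of_real ((-1) powi \<lfloor>y\<rfloor>)) * (fps_const 2 * fps_exp (of_real (frac y) * c) / (fps_exp c + 1)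
        - fps_const (if y \<in> \<int> then 1 else 0))"
    unfolding euler_bar_gf_def [abs_def] by (intro fps_expansion_intros) simp
  also have "\<dots> = Abs_fps (\<lambda>n. c ^ n / fact n * of_real (euler_bar n y))"
    by (rule fps_ext) (simp add: fps_nth_euler_poly_gf_scaled euler_bar_def)
  finally show ?thesis .
qed

lemma euler_bar_gf_nonneg:
  assumes "0 \<le> y" "y < 1"
  shows "euler_bar_gf c y t = 2 * exp (of_real y * c * t) / (exp (c * t) + 1) - (if y = 0 then 1 else 0)"
proof -
  have "\<lfloor>y\<rfloor> = 0" "frac y = y" "y \<in> \<int> \<longleftrightarrow> y = 0"
    using assms by (auto simp: floor_eq_iff frac_eq elim!: Ints_cases)
  then show ?thesis
    by (simp add: euler_bar_gf_def)
qed

lemma euler_bar_gf_nonpos: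
  assumes "-1 < y" "y \<le> 0" "exp (c * t) + 1 \<noteq> 0"
  shows "euler_bar_gf c y t
           = (if y = 0 then 1 else 0) - 2 * exp (c * t) * exp (of_real y * c * t) / (exp (c * t) + 1)"
proof (cases "y = 0")
  case True
  with assms(3) show ?thesis
    by (simp add: euler_bar_gf_def field_simps)
next
  case False
  with assms have fl: "\<lfloor>y\<rfloor> = -1"
    by (simp add: floor_eq_iff)
  then have fr: "frac y = y + 1"
    by (simp add: frac_def)
  moreover have "y \<notin> \<int>"
    using fr assms(1) frac_eq_0_iff[of y] by auto
  moreover have "exp (of_real (y + 1) * c * t) = exp (c * t) * exp (of_real y * c * t)"
    by (simp add: distrib_right add.commute flip: exp_add)
  ultimately show ?thesis
    using False fl by (simp add: euler_bar_gf_def)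
qed

lemma geometric_sum_cot_identity:
  fixes q E :: complex
  assumes "E + 1 \<noteq> 0" "q \<noteq> 1" "q ^ B = - E"
  shows "2 / (E + 1) * (\<Sum>l<B. q ^ l) - 1 = (1 + q) / (1 - q)"
proof -
  have "(\<Sum>l<B. q ^ l) = (E + 1) / (1 - q)"
    using assms(2,3) by (simp add: sum_gp_strict add.commute)
  then have "2 / (E + 1) * (\<Sum>l<B. q ^ l) = 2 / (1 - q)"
    using assms(1) by (metis nonzero_mult_divide_mult_cancel_right2 times_divide_times_eq)
  moreover have "1 - q \<noteq> 0"
    using assms(2) by simp
  ultimately show ?thesis
    by (simp add: field_simps)
qed

lemma exp_2pi_i_shift_power_nat_abs:
  fixes b r :: int and x t :: complex
  assumes b: "b \<noteq> 0" and x: "2 * of_int b * x = 2 * of_int r - 1"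
  shows "exp (2 * of_real pi * \<i> * (t - x)) ^ nat \<bar>b\<bar>
           = - exp (of_int (sgn b) * (2 * of_real pi * \<i> * of_int b * t))"
proof -
  have B: "(of_nat (nat \<bar>b\<bar>) :: complex) = of_int (sgn b) * of_int b"
    using b by (cases "b > 0") simp_all
  have "(of_int r :: complex) = of_int b * x + 1 / 2"
    using x by (simp add: field_simps)
  then have "of_nat (nat \<bar>b\<bar>) * (2 * of_real pi * \<i> * (t - x))
      = of_int (sgn b) * (2 * of_real pi * \<i> * of_int b * t) + of_real pi * \<i> * of_int (sgn b * (1 - 2 * r))"
    by (simp add: B algebra_simps)
  then have "exp (2 * of_real pi * \<i> * (t - x)) ^ nat \<bar>b\<bar>
      = exp (of_int (sgn b) * (2 * of_real pi * \<i> * of_int b * t)) * exp (of_real pi * \<i> * of_int (sgn b * (1 - 2 * r)))"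
    by (simp only: exp_add flip: exp_of_nat_mult)
  also have "odd (sgn b * (1 - 2 * r))"
    using b by (simp add: sgn_if)
  then have "exp (of_real pi * \<i> * of_int (sgn b * (1 - 2 * r))) = -1"
    by (rule exp_pi_i_odd)
  finally show ?thesis
    by simp
qed

lemma sum_euler_bar_gf_cot:
  fixes b r :: int and x t :: complex
  defines "c \<equiv> 2 * of_real pi * \<i> * of_int b"
    and "q \<equiv> exp (2 * of_real pi * \<i> * (t - x))"
  assumes b: "b \<noteq> 0" and x: "2 * of_int b * x = 2 * of_int r - 1"
    and E: "exp (c * t) + 1 \<noteq> 0" and q: "q \<noteq> 1"
  shows "(\<Sum>l<nat \<bar>b\<bar>. exp (- 2 * of_real pi * \<i> * of_nat l * x) * euler_bar_gf c (real l / real_of_int b) t)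
           = of_int (sgn b) * (1 + q) / (1 - q)"
proof -
  define B where "B = nat \<bar>b\<bar>"
  define E where "E = exp (c * t)"
  have B: "0 < B"
    using b by (simp add: B_def)
  have qB: "q ^ B = - exp (of_int (sgn b) * (c * t))"
    using exp_2pi_i_shift_power_nat_abs[OF b x] by (simp add: q_def c_def B_def)
  have power: "exp (- 2 * of_real pi * \<i> * of_nat l * x) * exp (of_real (real l / real_of_int b) * c * t) = q ^ l" for l
  proof -
    have "- 2 * of_real pi * \<i> * of_nat l * x + of_real (real l / real_of_int b) * c * t
        = of_nat l * (2 * of_real pi * \<i> * (t - x))"
      using b by (simp add: c_def field_simps)
    then show ?thesis
      by (simp add: q_def flip: exp_add exp_of_nat_mult)
  qed
  show ?thesis
  proof (cases "b > 0")
    case True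
    have "(\<Sum>l<B. exp (- 2 * of_real pi * \<i> * of_nat l * x) * euler_bar_gf c (real l / real_of_int b) t)
        = (\<Sum>l<B. 2 / (E + 1) * q ^ l - (if l = 0 then 1 else 0))"
      using True power by (intro sum.cong refl) (simp add: B_def euler_bar_gf_nonneg E_def field_simps)
    also have "\<dots> = 2 / (E + 1) * (\<Sum>l<B. q ^ l) - 1"
      using B by (simp add: sum_subtractf sum_distrib_left)
    also have "\<dots> = (1 + q) / (1 - q)"
      using True qB E q by (intro geometric_sum_cot_identity) (simp_all add: E_def)
    finally show ?thesis
      using True by (simp add: B_def)
  next
    case False
    have "(\<Sum>l<B. exp (- 2 * of_real pi * \<i> * of_nat l * x) * euler_bar_gf c (real l / real_of_int b) t)
        = (\<Sum>l<B. (if l = 0 then 1 else 0) - 2 / (inverse E + 1) * q ^ l)"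
      using False b power E by (intro sum.cong refl) (simp add: B_def euler_bar_gf_nonpos E_def field_simps)
    also have "\<dots> = - (2 / (inverse E + 1) * (\<Sum>l<B. q ^ l) - 1)"
      using B by (simp add: sum_subtractf sum_distrib_left)
    also have "\<dots> = - ((1 + q) / (1 - q))"
      using False b qB E q by (subst geometric_sum_cot_identity) (simp_all add: E_def exp_minus field_simps)
    finally show ?thesis
      using False b by (simp add: B_def minus_divide_left)
  qed
qed

lemma Digamma_reflection_diff_eq_sum_euler_bar_gf:
  fixes b r :: int and x t :: complex
  assumes b: "b \<noteq> 0" and x: "2 * of_int b * x = 2 * of_int r - 1"
    and xt: "x - t \<notin> \<int>" and E: "exp (2 * of_real pi * \<i> * of_int b * t) + 1 \<noteq> 0"
  shows "Digamma (1 - x + t) - Digamma (x - t) = of_int (sgn b) * of_real pi * \<i>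
           * (\<Sum>l<nat \<bar>b\<bar>. exp (- 2 * of_real pi * \<i> * of_nat l * x)
                * euler_bar_gf (2 * of_real pi * \<i> * of_int b) (real l / real_of_int b) t)"
proof -
  define q where "q = exp (2 * of_real pi * \<i> * (t - x))"
  have "q \<noteq> 1"
    using xt exp_2pi_i_eq_1_iff[of "t - x"] Ints_minus[of "t - x"] by (auto simp: q_def)
  have "Digamma (1 - x + t) - Digamma (x - t) = of_real pi * cot (of_real pi * (x - t))"
    using Digamma_reflection_complex[OF xt] by (simp add: algebra_simps)
  also have "\<dots> = of_real pi * \<i> * (1 + q) / (1 - q)"
    by (simp add: cot_exp_eq q_def algebra_simps)
  also have "\<dots> = of_int (sgn b) * of_real pi * \<i> * (of_int (sgn b) * (1 + q) / (1 - q))"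
    using b by (simp add: sgn_if)
  finally show ?thesis
    using sum_euler_bar_gf_cot[OF b x E] \<open>q \<noteq> 1\<close> by (simp add: q_def)
qed

lemma Digamma_reflection_diff_has_fps_expansion:
  fixes b r :: int and x :: complex
  assumes b: "b \<noteq> 0" and x: "2 * of_int b * x = 2 * of_int r - 1"
  shows "(\<lambda>t. Digamma (1 - x + t) - Digamma (x - t)) has_fps_expansion
           Abs_fps (\<lambda>n. of_int (sgn b) * of_real pi * \<i> * (2 * of_real pi * \<i> * of_int b) ^ n / fact n
             * (\<Sum>l<nat \<bar>b\<bar>. exp (- 2 * of_real pi * \<i> * of_nat l * x)
                  * of_real (euler_bar n (real l / real_of_int b))))"
    (is "_ has_fps_expansion ?F")
proof -
  define c where "c = 2 * of_real pi * \<i> * of_int b"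
  define h where "h t = of_int (sgn b) * of_real pi * \<i>
      * (\<Sum>l<nat \<bar>b\<bar>. exp (- 2 * of_real pi * \<i> * of_nat l * x) * euler_bar_gf c (real l / real_of_int b) t)"
    for t
  have "h has_fps_expansion fps_const (of_int (sgn b) * of_real pi * \<i>)
      * (\<Sum>l<nat \<bar>b\<bar>. fps_const (exp (- 2 * of_real pi * \<i> * of_nat l * x))
           * Abs_fps (\<lambda>n. c ^ n / fact n * of_real (euler_bar n (real l / real_of_int b))))"
    unfolding h_def [abs_def] by (intro fps_expansion_intros euler_bar_gf_has_fps_expansion)
  also have "\<dots> = ?F"
    by (rule fps_ext) (simp add: fps_sum_nth c_def sum_distrib_left mult_ac)
  finally have h: "h has_fps_expansion ?F" .
  define U where "U = (\<lambda>t. x - t) -` (- \<int>) \<inter> {t. exp (c * t) + 1 \<noteq> 0}"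
  have "open U"
    unfolding U_def
    by (intro open_Int continuous_open_vimage open_Compl closed_Ints open_Collect_neg closed_Collect_eq)
      (auto intro!: continuous_intros)
  moreover have "0 \<in> U"
    using not_Ints_if_double_odd[OF x] by (simp add: U_def)
  ultimately have "eventually (\<lambda>t. t \<in> U) (nhds 0)"
    by (rule eventually_nhds_in_open)
  then have "eventually (\<lambda>t. h t = Digamma (1 - x + t) - Digamma (x - t)) (nhds 0)"
    by eventually_elim
      (simp add: U_def h_def c_def Digamma_reflection_diff_eq_sum_euler_bar_gf[OF b x])
  then show ?thesis
    using h by (subst (asm) has_fps_expansion_cong) auto
qed

lemma symmetric_sum_inverse_power_LIMSEQ_euler_bar:
  fixes b r :: int and x :: complex
  assumes b: "b \<noteq> 0" and x: "2 * of_int b * x = 2 * of_int r - 1"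
  shows "(\<lambda>N. \<Sum>d\<in>{- int N..int N}. 1 / (of_int d + x) ^ Suc n)
           \<longlonglongrightarrow> of_int (sgn b) * of_real pi * \<i> * (2 * of_real pi * \<i> * of_int b) ^ n / fact n
                * (\<Sum>l<nat \<bar>b\<bar>. exp (- 2 * of_real pi * \<i> * of_nat l * x)
                     * of_real (euler_bar n (real l / real_of_int b)))"
proof -
  have x_not_Int: "x \<notin> \<int>"
    by (rule not_Ints_if_double_odd[OF x])
  have "(Polygamma n (1 - x) - (-1) ^ n * Polygamma n x) / fact n
      = of_int (sgn b) * of_real pi * \<i> * (2 * of_real pi * \<i> * of_int b) ^ n / fact n
        * (\<Sum>l<nat \<bar>b\<bar>. exp (- 2 * of_real pi * \<i> * of_nat l * x)
             * of_real (euler_bar n (real l / real_of_int b)))"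
    using fps_nth_fps_expansion[OF Digamma_reflection_diff_has_fps_expansion[OF b x], of n]
    unfolding higher_deriv_Digamma_reflection_diff[OF x_not_Int] by simp
  then show ?thesis
    using symmetric_sum_inverse_power_LIMSEQ[OF x_not_Int, of n] by (simp only:)
qed

theorem lemma2p5:
  fixes j :: nat and b r :: int
  assumes "j \<ge> 1" and "b \<noteq> 0"
  shows "(\<lambda>N. \<Sum>d\<in>{- int N..int N}.
            1 / (of_int d + of_int r / of_int b - 1 / (2 * of_int b)) ^ j :: complex)
         \<longlonglongrightarrow>
         (2 * of_real pi * \<i>) ^ j * of_int (sgn b)
           / (2 * fact (j - 1) * (of_int b) powi (1 - int j))
           * (\<Sum>l<nat \<bar>b\<bar>.
                exp (- 2 * of_real pi * \<i> * of_nat l * of_int r / of_int b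
                     + of_real pi * \<i> * of_nat l / of_int b)
                * of_real (euler_bar (j - 1) (real l / real_of_int b)))"
proof -
  define n where "n = j - 1"
  define x :: complex where "x = of_int r / of_int b - 1 / (2 * of_int b)"
  have j: "j = Suc n"
    using assms(1) by (simp add: n_def)
  have x: "2 * of_int b * x = 2 * of_int r - 1"
    using assms(2) by (simp add: x_def field_simps)
  have "(of_int b :: complex) powi (1 - int j) = inverse (of_int b ^ n)"
    by (simp add: j power_int_minus)
  then have factor: "(2 * of_real pi * \<i>) ^ j * of_int (sgn b) / (2 * fact (j - 1) * (of_int b) powi (1 - int j))
      = of_int (sgn b) * of_real pi * \<i> * (2 * of_real pi * \<i> * of_int b) ^ n / fact n"
    using assms(2) by (simp add: j power_mult_distrib field_simps)
  have root: "exp (- 2 * of_real pi * \<i> * of_nat l * of_int r / of_int b + of_real pi * \<i> * of_nat l / of_int b)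
      = exp (- 2 * of_real pi * \<i> * of_nat l * x)" for l
    using assms(2) by (intro arg_cong[where f = exp]) (simp add: x_def field_simps)
  show ?thesis
    unfolding factor root unfolding n_def[symmetric]
    using symmetric_sum_inverse_power_LIMSEQ_euler_bar[OF assms(2) x, of n]
    by (simp add: j x_def add_diff_eq)
qed

end
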